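(* Let $p\in(1,2]$ and let $Y_1,Y_2,\dots$ be i.i.d. real random variables with $\nu_p:=\mathbb{E}|Y_k|^p<\infty$ and mean $y:=\mathbb{E}[Y_k]$. For a constant $c>0$ and $n\ge1$ define $$\hat Y_n:=\frac{c}{n^{1-1/p}}\sum_{k=1}^n\psi_p\!\left(\frac{Y_k}{c\,n^{1/p}}\right).$$ Then for all $\epsilon>0$, $$\mathbb{P}\left(\hat Y_n>y+\epsilon\right)\le\exp\left(-\frac{n^{(p-1)/p}\epsilon}{c}+\frac{b_p\nu_p}{c^p}\right),\qquad \mathbb{P}\left(y>\hat Y_n+\epsilon\right)\le\exp\left(-\frac{n^{(p-1)/p}\epsilon}{c}+\frac{b_p\nu_p}{c^p}\right).$$
   Context: $b_p:=\left[2\left(\frac{2-p}{p-1}\right)^{1-\frac{2}{p}}+\left(\frac{2-p}{p-1}\right)^{2-\frac{2}{p}}\right]^{-p/2}$ (with $0^0=1$ when $p=2$). The influence function is $\psi_p(x):=\ln\left(b_p|x|^p+x+1\right)$ for $x\ge0$ and $\psi_p(x):=-\ln\left(b_p|x|^p-x+1\right)$ for $x<0$. *)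

theory Defs
  imports "HOL-Probability.Probability"
begin

definition rpow0 :: "real \<Rightarrow> real \<Rightarrow> real" where
  "rpow0 x a = (if x = 0 then (if a = 0 then 1 else 0) else x powr a)"

definition b_const :: "real \<Rightarrow> real" where
  "b_const p = (let r = (2 - p) / (p - 1) in
     (2 * rpow0 r (1 - 2 / p) + rpow0 r (2 - 2 / p)) powr (- p / 2))"

definition psi :: "real \<Rightarrow> real \<Rightarrow> real" where
  "psi p x = (if x \<ge> 0 then ln (b_const p * \<bar>x\<bar> powr p + x + 1)
              else - ln (b_const p * \<bar>x\<bar> powr p - x + 1))"

definition catoni_est :: "real \<Rightarrow> real \<Rightarrow> (nat \<Rightarrow> 'a \<Rightarrow> real) \<Rightarrow> nat \<Rightarrow> 'a \<Rightarrow> real" where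
  "catoni_est p c Y n \<omega> =
     c / (real n) powr (1 - 1 / p) * (\<Sum>k=1..n. psi p (Y k \<omega> / (c * (real n) powr (1 / p))))"

end

theory Submission
  imports Defs
begin

text \<open>The constant \<open>b\<^sub>p\<close> is exactly what makes \<open>exp (\<psi>\<^sub>p x) \<le> 1 + x + b\<^sub>p \<bar>x\<bar>\<^sup>p\<close> hold for
  all real \<open>x\<close>: for \<open>x = -t < 0\<close> this says \<open>1 / (1 + t + v) \<le> 1 - t + v\<close> with \<open>v = b\<^sub>p t\<^sup>p\<close>, i.e.
  \<open>t\<^sup>2 \<le> 2v + v\<^sup>2\<close>, which is a weighted AM-GM inequality whose geometric mean is \<open>1\<close> precisely
  for this \<open>b\<^sub>p\<close>. Taking expectations, each factor \<open>E exp (\<psi>\<^sub>p (Y\<^sub>k / a))\<close> with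
  \<open>a = c n powr (1 / p)\<close> is at most \<open>exp (y / a + b\<^sub>p \<nu>\<^sub>p / a\<^sup>p)\<close>, and the Chernoff bound for the
  independent sum gives the upper tail. The lower tail is the upper tail of \<open>-Y\<^sub>k\<close>, since
  \<open>\<psi>\<^sub>p\<close> is odd.\<close>

lemma b_const_pos:
  assumes "1 < p" "p \<le> 2"
  shows "b_const p > 0"
proof -
  define r where "r = (2 - p) / (p - 1)"
  have "r \<ge> 0" using assms by (simp add: r_def)
  moreover have "r = 0 \<Longrightarrow> p = 2" using assms by (simp add: r_def)
  ultimately have "2 * rpow0 r (1 - 2 / p) + rpow0 r (2 - 2 / p) > 0"
    by (cases "r = 0") (auto simp: rpow0_def add_pos_nonneg)
  then show ?thesis unfolding b_const_def Let_def r_def by simp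
qed

lemma b_const_two: "b_const 2 = 1 / 2"
  by (simp add: b_const_def rpow0_def powr_minus)

lemma ln_b_const:
  assumes "1 < p" "p < 2"
  shows "ln (b_const p) = (p - 1) * (ln (p - 1) - ln p) + (2 - p) / 2 * (ln (2 - p) - ln p)"
proof -
  define r where "r = (2 - p) / (p - 1)"
  have r: "r > 0" using assms by (simp add: r_def)
  have "2 * rpow0 r (1 - 2 / p) + rpow0 r (2 - 2 / p) = r powr (1 - 2 / p) * (2 + r)"
    using r by (simp add: rpow0_def diff_divide_distrib powr_diff add_divide_distrib power2_eq_square algebra_simps)
  also have "2 + r = p / (p - 1)" using assms by (simp add: r_def field_simps)
  finally have "ln (b_const p) = - p / 2 * ln (r powr (1 - 2 / p) * (p / (p - 1)))"
    unfolding b_const_def Let_def r_def[symmetric] using r assms by (simp add: ln_powr)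
  also have "\<dots> = - p / 2 * ((1 - 2 / p) * (ln (2 - p) - ln (p - 1)) + ln p - ln (p - 1))"
    using r assms by (simp add: ln_mult ln_powr ln_div r_def)
  also have "\<dots> = (p - 1) * (ln (p - 1) - ln p) + (2 - p) / 2 * (ln (2 - p) - ln p)"
    using assms by (simp add: diff_divide_distrib algebra_simps)
  finally show ?thesis .
qed

lemma one_le_b_const_powr_sum:
  assumes "1 < p" "p < 2" "t > 0"
  shows "1 \<le> 2 * b_const p * t powr (p - 2) + (b_const p)\<^sup>2 * t powr (2 * p - 2)"
proof -
  define b where "b = b_const p"
  have b: "b > 0" using b_const_pos assms by (simp add: b_def)
  \<comment> \<open>Jensen for \<open>exp\<close> with weights \<open>w1 + w2 = 1\<close>; \<open>ln_b_const\<close> makes \<open>w1 * A + w2 * B\<close> vanish.\<close>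
  define w1 w2 where "w1 = 2 * (p - 1) / p" and "w2 = (2 - p) / p"
  define A where "A = ln b + ln p - ln (p - 1) + (p - 2) * ln t"
  define B where "B = 2 * ln b + ln p - ln (2 - p) + (2 * p - 2) * ln t"
  have "w1 * A + w2 * B = 0"
    unfolding A_def B_def b_def ln_b_const[OF assms(1,2)] w1_def w2_def
    using assms(1) by (simp add: field_simps)
  moreover have "exp ((1 - w2) *\<^sub>R A + w2 *\<^sub>R B) \<le> (1 - w2) * exp A + w2 * exp B"
    using convex_onD[OF exp_convex, of w2 A B] assms by (simp add: w2_def)
  moreover have "w1 = 1 - w2" using assms(1) by (simp add: w1_def w2_def field_simps)
  ultimately have "1 \<le> w1 * exp A + w2 * exp B" by (simp add: add.commute)
  moreover have "w1 * exp A = 2 * b * t powr (p - 2)"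
    using assms b by (simp add: A_def w1_def exp_add exp_diff powr_def field_simps)
  moreover have "w2 * exp B = b\<^sup>2 * t powr (2 * p - 2)"
    using assms b by (simp add: B_def w2_def exp_add exp_diff powr_def exp_of_nat_mult[of 2, simplified])
  ultimately show ?thesis by (simp add: b_def)
qed

lemma square_le_b_const_powr:
  assumes "1 < p" "p \<le> 2" "t \<ge> 0"
  shows "t\<^sup>2 \<le> 2 * (b_const p * t powr p) + (b_const p * t powr p)\<^sup>2"
proof (cases "t = 0 \<or> p = 2")
  case True
  then show ?thesis using assms by (auto simp: b_const_two)
next
  case False
  then have t: "t > 0" and p: "p < 2" using assms by auto
  have t2: "t\<^sup>2 = t powr 2" using t by (simp add: powr_numeral)
  have "t\<^sup>2 * t powr (p - 2) = t powr (2 + (p - 2))"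
    unfolding t2 powr_add ..
  then have powr1: "t\<^sup>2 * t powr (p - 2) = t powr p" by simp
  have "t\<^sup>2 * t powr (2 * p - 2) = t powr (2 + (2 * p - 2))"
    unfolding t2 powr_add ..
  also have "2 + (2 * p - 2) = p + p" by simp
  also have "t powr (p + p) = (t powr p)\<^sup>2"
    unfolding powr_add power2_eq_square ..
  finally have powr2: "t\<^sup>2 * t powr (2 * p - 2) = (t powr p)\<^sup>2" .
  have "t\<^sup>2 \<le> t\<^sup>2 * (2 * b_const p * t powr (p - 2) + (b_const p)\<^sup>2 * t powr (2 * p - 2))"
    using mult_left_mono[OF one_le_b_const_powr_sum[OF assms(1) p t], of "t\<^sup>2"] by simp
  also have "\<dots> = 2 * b_const p * (t\<^sup>2 * t powr (p - 2)) + (b_const p)\<^sup>2 * (t\<^sup>2 * t powr (2 * p - 2))"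
    by (simp add: algebra_simps)
  finally show ?thesis unfolding powr1 powr2 by (simp add: power_mult_distrib)
qed

lemma exp_psi_le:
  assumes "1 < p" "p \<le> 2"
  shows "exp (psi p x) \<le> 1 + x + b_const p * \<bar>x\<bar> powr p"
proof -
  define v where "v = b_const p * \<bar>x\<bar> powr p"
  have v: "v \<ge> 0" using b_const_pos[OF assms] by (simp add: v_def)
  show ?thesis
  proof (cases "x \<ge> 0")
    case True
    then have "1 + x + v > 0" using v by simp
    then show ?thesis using True by (simp add: psi_def v_def algebra_simps)
  next
    case False
    then have pos: "v - x + 1 > 0" using v by simp
    have "1 \<le> (1 + x + v) * (v - x + 1)"
      using square_le_b_const_powr[OF assms, of "\<bar>x\<bar>"]
      by (simp add: v_def[symmetric] algebra_simps power2_eq_square)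
    then have "1 / (v - x + 1) \<le> 1 + x + v" using pos by (simp add: divide_simps)
    moreover have "psi p x = - ln (v - x + 1)" using False by (simp add: psi_def v_def)
    ultimately show ?thesis using pos by (simp add: exp_minus inverse_eq_divide v_def)
  qed
qed

lemma psi_uminus: "psi p (- x) = - psi p x"
  by (cases "x > 0") (auto simp: psi_def)

lemma borel_measurable_psi [measurable]: "psi p \<in> borel_measurable borel"
  unfolding psi_def by measurable

lemma integrable_comp_iff_of_distr_eq:
  fixes f :: "'b \<Rightarrow> 'c::{banach, second_countable_topology}"
  assumes "X \<in> measurable M N" "X' \<in> measurable M N" "distr M N X = distr M N X'"
    and "f \<in> borel_measurable N"
  shows "integrable M (\<lambda>\<omega>. f (X \<omega>)) \<longleftrightarrow> integrable M (\<lambda>\<omega>. f (X' \<omega>))"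
  using integrable_distr_eq[OF assms(1,4)] integrable_distr_eq[OF assms(2,4)] assms(3) by simp

lemma integral_comp_eq_of_distr_eq:
  fixes f :: "'b \<Rightarrow> 'c::{banach, second_countable_topology}"
  assumes "X \<in> measurable M N" "X' \<in> measurable M N" "distr M N X = distr M N X'"
    and "f \<in> borel_measurable N"
  shows "(\<integral>\<omega>. f (X \<omega>) \<partial>M) = (\<integral>\<omega>. f (X' \<omega>) \<partial>M)"
  using integral_distr[OF assms(1,4)] integral_distr[OF assms(2,4)] assms(3) by simp

lemma (in finite_measure) integrable_of_integrable_abs_powr:
  fixes f :: "'a \<Rightarrow> real"
  assumes "1 \<le> p" "f \<in> borel_measurable M" "integrable M (\<lambda>x. \<bar>f x\<bar> powr p)"
  shows "integrable M f"
proof (rule Bochner_Integration.integrable_bound)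
  show "integrable M (\<lambda>x. 1 + \<bar>f x\<bar> powr p)" using assms(3) by simp
  have "\<bar>y\<bar> \<le> 1 + \<bar>y\<bar> powr p" for y :: real
  proof (cases "\<bar>y\<bar> \<le> 1")
    case False
    then have "\<bar>y\<bar> powr 1 \<le> \<bar>y\<bar> powr p" using assms(1) by (intro powr_mono) auto
    then show ?thesis using False by simp
  qed (simp add: add_increasing2)
  then show "AE x in M. norm (f x) \<le> norm (1 + \<bar>f x\<bar> powr p)" by (auto intro: order_trans)
qed (use assms(2) in simp)

lemma (in prob_space) expectation_exp_psi_le:
  assumes "1 < p" "p \<le> 2" and [measurable]: "random_variable borel X"
    and moment: "integrable M (\<lambda>\<omega>. \<bar>X \<omega>\<bar> powr p)"
  shows "integrable M (\<lambda>\<omega>. exp (psi p (X \<omega>)))"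
    and "expectation (\<lambda>\<omega>. exp (psi p (X \<omega>)))
           \<le> exp (expectation X + b_const p * expectation (\<lambda>\<omega>. \<bar>X \<omega>\<bar> powr p))"
proof -
  define h where "h \<omega> = 1 + X \<omega> + b_const p * \<bar>X \<omega>\<bar> powr p" for \<omega>
  have "integrable M X" using integrable_of_integrable_abs_powr[of p X] assms by simp
  then have h: "integrable M h" unfolding h_def using moment by simp
  have le_h: "exp (psi p (X \<omega>)) \<le> h \<omega>" for \<omega>
    unfolding h_def by (rule exp_psi_le[OF assms(1,2)])
  show int: "integrable M (\<lambda>\<omega>. exp (psi p (X \<omega>)))"
    by (rule Bochner_Integration.integrable_bound[OF h]) (auto intro!: AE_I2 order_trans[OF le_h])
  have "expectation (\<lambda>\<omega>. exp (psi p (X \<omega>))) \<le> expectation h"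
    by (rule integral_mono[OF int h le_h])
  also have "\<dots> = 1 + expectation X + b_const p * expectation (\<lambda>\<omega>. \<bar>X \<omega>\<bar> powr p)"
    unfolding h_def using \<open>integrable M X\<close> moment by (simp add: prob_space)
  also have "\<dots> \<le> exp (expectation X + b_const p * expectation (\<lambda>\<omega>. \<bar>X \<omega>\<bar> powr p))"
    using exp_ge_add_one_self by (simp add: add.assoc)
  finally show "expectation (\<lambda>\<omega>. exp (psi p (X \<omega>)))
           \<le> exp (expectation X + b_const p * expectation (\<lambda>\<omega>. \<bar>X \<omega>\<bar> powr p))" .
qed

lemma (in prob_space) prob_sum_gt_le_prod_exp:
  fixes X :: "'i \<Rightarrow> 'a \<Rightarrow> real"
  assumes "finite I" "indep_vars (\<lambda>_. borel) X I"
    and "\<And>i. i \<in> I \<Longrightarrow> integrable M (\<lambda>\<omega>. exp (X i \<omega>))"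
  shows "prob {\<omega> \<in> space M. T < (\<Sum>i\<in>I. X i \<omega>)}
           \<le> exp (- T) * (\<Prod>i\<in>I. expectation (\<lambda>\<omega>. exp (X i \<omega>)))"
proof -
  define Z where "Z \<omega> = (\<Prod>i\<in>I. exp (X i \<omega>))" for \<omega>
  have "indep_vars (\<lambda>_. borel) (\<lambda>i \<omega>. exp (X i \<omega>)) I"
    using assms(2) by (rule indep_vars_compose2) simp
  then have Z: "integrable M Z" and EZ: "expectation Z = (\<Prod>i\<in>I. expectation (\<lambda>\<omega>. exp (X i \<omega>)))"
    unfolding Z_def using assms(1,3)
    by (auto intro: indep_vars_integrable indep_vars_lebesgue_integral)
  have "{\<omega> \<in> space M. T < (\<Sum>i\<in>I. X i \<omega>)} \<subseteq> {\<omega> \<in> space M. exp T \<le> Z \<omega>}"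
    by (auto simp: Z_def exp_sum[OF assms(1), symmetric] less_imp_le)
  then have "prob {\<omega> \<in> space M. T < (\<Sum>i\<in>I. X i \<omega>)} \<le> prob {\<omega> \<in> space M. exp T \<le> Z \<omega>}"
    using borel_measurable_integrable[OF Z] by (intro finite_measure_mono) measurable
  also have "\<dots> \<le> expectation Z / exp T"
    by (rule integral_Markov_inequality_measure[OF Z, of "space M"]) (auto simp: Z_def prod_nonneg)
  finally show ?thesis by (simp add: EZ exp_minus divide_inverse mult.commute)
qed

lemma catoni_est_uminus: "catoni_est p c (\<lambda>k \<omega>. - Y k \<omega>) n \<omega> = - catoni_est p c Y n \<omega>"
  by (simp add: catoni_est_def psi_uminus sum_negf)

lemma (in prob_space) catoni_est_upper_tail:
  assumes p: "1 < p" "p \<le> 2"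
    and rv: "\<And>k. k \<ge> 1 \<Longrightarrow> random_variable borel (Y k)"
    and indep: "indep_vars (\<lambda>_. borel) Y {1..}"
    and ident: "\<And>k. k \<ge> 1 \<Longrightarrow> distr M borel (Y k) = distr M borel (Y 1)"
    and moment: "integrable M (\<lambda>\<omega>. \<bar>Y 1 \<omega>\<bar> powr p)"
    and c: "c > 0" and n: "n \<ge> 1"
  shows "prob {\<omega> \<in> space M. catoni_est p c Y n \<omega> > expectation (Y 1) + \<epsilon>}
           \<le> exp (- (real n powr ((p - 1) / p) * \<epsilon> / c)
                 + b_const p * expectation (\<lambda>\<omega>. \<bar>Y 1 \<omega>\<bar> powr p) / c powr p)"
proof -
  define m \<nu> b where "m = expectation (Y 1)" and "\<nu> = expectation (\<lambda>\<omega>. \<bar>Y 1 \<omega>\<bar> powr p)"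
    and "b = b_const p"
  define a N where "a = c * real n powr (1 / p)" and "N = real n powr ((p - 1) / p)"
  define T where "T = (m + \<epsilon>) * N / c"
  have a: "a > 0" using c n by (simp add: a_def)
  have N: "N > 0" using n by (simp add: N_def)
  have exp_moment: "integrable M (\<lambda>\<omega>. exp (psi p (Y k \<omega> / a)))
      \<and> expectation (\<lambda>\<omega>. exp (psi p (Y k \<omega> / a))) \<le> exp (m / a + b * \<nu> / a powr p)"
    if k: "k \<ge> 1" for k
  proof -
    have f: "(\<lambda>y. \<bar>y / a\<bar> powr p) \<in> borel_measurable borel" by measurable
    have "integrable M (\<lambda>\<omega>. \<bar>Y 1 \<omega> / a\<bar> powr p)"
      using moment a by (simp add: abs_divide powr_divide)
    then have "integrable M (\<lambda>\<omega>. \<bar>Y k \<omega> / a\<bar> powr p)"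
      using integrable_comp_iff_of_distr_eq[OF rv[OF k] rv[of 1] ident[OF k] f] by blast
    moreover have "expectation (\<lambda>\<omega>. Y k \<omega> / a) = m / a"
      using integral_comp_eq_of_distr_eq[OF rv[OF k] rv[of 1] ident[OF k], of "\<lambda>y. y / a"]
      by (simp add: m_def)
    moreover have "expectation (\<lambda>\<omega>. \<bar>Y k \<omega> / a\<bar> powr p) = \<nu> / a powr p"
      using integral_comp_eq_of_distr_eq[OF rv[OF k] rv[of 1] ident[OF k], of "\<lambda>y. \<bar>y / a\<bar> powr p"] a
      by (simp add: \<nu>_def abs_divide powr_divide)
    ultimately show ?thesis
      using expectation_exp_psi_le[OF p, of "\<lambda>\<omega>. Y k \<omega> / a"] rv[OF k] a by (simp add: b_def)
  qed
  have indep_psi: "indep_vars (\<lambda>_. borel) (\<lambda>k \<omega>. psi p (Y k \<omega> / a)) {1..n}"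
    using indep_vars_subset[OF indep, of "{1..n}"] by (auto intro: indep_vars_compose2)
  have "catoni_est p c Y n \<omega> = c / N * (\<Sum>k=1..n. psi p (Y k \<omega> / a))" for \<omega>
    using p by (simp add: catoni_est_def a_def N_def diff_divide_distrib)
  moreover have "m + \<epsilon> < c / N * s \<longleftrightarrow> T < s" for s
    using c N by (simp add: T_def field_simps)
  ultimately have "{\<omega> \<in> space M. catoni_est p c Y n \<omega> > m + \<epsilon>}
      = {\<omega> \<in> space M. T < (\<Sum>k=1..n. psi p (Y k \<omega> / a))}"
    by simp
  also have "prob \<dots> \<le> exp (- T) * (\<Prod>k=1..n. expectation (\<lambda>\<omega>. exp (psi p (Y k \<omega> / a))))"
    using exp_moment by (intro prob_sum_gt_le_prod_exp[OF _ indep_psi]) auto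
  also have "\<dots> \<le> exp (- T) * (\<Prod>k=1..n. exp (m / a + b * \<nu> / a powr p))"
    using exp_moment by (intro mult_left_mono prod_mono) (auto intro: integral_nonneg_AE)
  also have "\<dots> = exp (- T + real n * (m / a + b * \<nu> / a powr p))"
    by (simp only: prod_constant card_atLeastAtMost exp_add exp_of_nat_mult) simp
  also have "- T + real n * (m / a + b * \<nu> / a powr p) = - (N * \<epsilon> / c) + b * \<nu> / c powr p"
  proof -
    have "real n = real n powr (1 / p) * N"
      using n p by (simp add: N_def powr_add[symmetric] diff_divide_distrib)
    moreover have "a powr p = c powr p * real n"
      using c n p by (simp add: a_def powr_mult powr_powr)
    ultimately show ?thesis using c n a by (simp add: T_def a_def field_simps)
  qed
  finally show ?thesis by (simp add: m_def \<nu>_def b_def N_def)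
qed

lemma (in prob_space) catoni_est_lower_tail:
  assumes p: "1 < p" "p \<le> 2"
    and rv: "\<And>k. k \<ge> 1 \<Longrightarrow> random_variable borel (Y k)"
    and indep: "indep_vars (\<lambda>_. borel) Y {1..}"
    and ident: "\<And>k. k \<ge> 1 \<Longrightarrow> distr M borel (Y k) = distr M borel (Y 1)"
    and moment: "integrable M (\<lambda>\<omega>. \<bar>Y 1 \<omega>\<bar> powr p)"
    and c: "c > 0" and n: "n \<ge> 1"
  shows "prob {\<omega> \<in> space M. expectation (Y 1) > catoni_est p c Y n \<omega> + \<epsilon>}
           \<le> exp (- (real n powr ((p - 1) / p) * \<epsilon> / c)
                 + b_const p * expectation (\<lambda>\<omega>. \<bar>Y 1 \<omega>\<bar> powr p) / c powr p)"
proof -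
  define Y' where "Y' = (\<lambda>k \<omega>. - Y k \<omega>)"
  have rv': "random_variable borel (Y' k)" if "k \<ge> 1" for k
    using rv[OF that] unfolding Y'_def by measurable
  have indep': "indep_vars (\<lambda>_. borel) Y' {1..}"
    unfolding Y'_def using indep by (rule indep_vars_compose2) simp
  have ident': "distr M borel (Y' k) = distr M borel (Y' 1)" if k: "k \<ge> 1" for k
  proof -
    have "Y' j = uminus \<circ> Y j" for j by (simp add: Y'_def comp_def)
    then show ?thesis
      using distr_distr[of uminus borel borel "Y k" M] distr_distr[of uminus borel borel "Y 1" M]
        rv[OF k] rv[of 1] ident[OF k] by simp
  qed
  have "prob {\<omega> \<in> space M. catoni_est p c Y' n \<omega> > expectation (Y' 1) + \<epsilon>}
          \<le> exp (- (real n powr ((p - 1) / p) * \<epsilon> / c)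
                + b_const p * expectation (\<lambda>\<omega>. \<bar>Y' 1 \<omega>\<bar> powr p) / c powr p)"
    using moment by (intro catoni_est_upper_tail[OF p rv' indep' ident' _ c n]) (simp_all add: Y'_def)
  moreover have "catoni_est p c Y' n \<omega> = - catoni_est p c Y n \<omega>" for \<omega>
    unfolding Y'_def by (rule catoni_est_uminus)
  moreover have "expectation (Y' 1) = - expectation (Y 1)"
    by (simp add: Y'_def)
  ultimately show ?thesis by (simp add: Y'_def algebra_simps)
qed

theorem theorem2:
  fixes M :: "'a measure" and Y :: "nat \<Rightarrow> 'a \<Rightarrow> real"
    and p c \<epsilon> :: real and n :: nat
  assumes "prob_space M"
    and "1 < p" "p \<le> 2"
    and rv: "\<And>k. k \<ge> 1 \<Longrightarrow> Y k \<in> borel_measurable M"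
    and indep: "prob_space.indep_vars M (\<lambda>_. borel) Y {1..}"
    and ident: "\<And>k. k \<ge> 1 \<Longrightarrow> distr M borel (Y k) = distr M borel (Y 1)"
    and moment: "integrable M (\<lambda>\<omega>. \<bar>Y 1 \<omega>\<bar> powr p)"
    and "c > 0" and "n \<ge> 1" and "\<epsilon> > 0"
  shows "measure M {\<omega> \<in> space M. catoni_est p c Y n \<omega> > (\<integral>\<omega>. Y 1 \<omega> \<partial>M) + \<epsilon>}
           \<le> exp (- ((real n powr ((p - 1) / p)) * \<epsilon> / c)
                 + b_const p * (\<integral>\<omega>. \<bar>Y 1 \<omega>\<bar> powr p \<partial>M) / c powr p)
      \<and> measure M {\<omega> \<in> space M. (\<integral>\<omega>. Y 1 \<omega> \<partial>M) > catoni_est p c Y n \<omega> + \<epsilon>}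
           \<le> exp (- ((real n powr ((p - 1) / p)) * \<epsilon> / c)
                 + b_const p * (\<integral>\<omega>. \<bar>Y 1 \<omega>\<bar> powr p \<partial>M) / c powr p)"
  using prob_space.catoni_est_upper_tail[OF assms(1-3) rv indep ident moment assms(8,9)]
    prob_space.catoni_est_lower_tail[OF assms(1-3) rv indep ident moment assms(8,9)]
  by simp

end
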